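(* Let $I$ be a linearly ordered set, $(\mathcal{A}_i,\phi_i)_{i\in I}$ noncommutative probability spaces, and let $\psi:\bigsqcup_{i\in I}\mathcal{A}_i\to\mathbb{C}$ be the linear functional on the free product without identification of units such that $\psi|_{\mathcal{A}_i}=\phi_i$ for each $i$, $\psi(a_1a_2\cdots a_n)=0$ whenever $a_k\in\mathcal{A}_{i_k}\cap\mathrm{Ker}\,\phi_{i_k}$ and $i_1\ne i_2\ne\cdots\ne i_n$, and $$\psi(a_1\cdots a_{k-1}1_{i_k}a_{k+1}\cdots a_n)=\begin{cases}\psi(a_1\cdots a_{k-1}a_{k+1}\cdots a_n)&\text{if } i_1<i_2<\cdots<i_k,\\ 0&\text{otherwise,}\end{cases}$$ for $1\le k\le n$, where $a_j\in\mathcal{A}_{i_j}\cap\mathrm{Ker}\,\phi_{i_j}$ for $j<k$, $a_j\in\mathcal{A}_{i_j}$ arbitrary for $j>k$, and $1_{i_k}$ is the unit of $\mathcal{A}_{i_k}$ (the empty word having value $1$). Then $\psi$ agrees with the monotone product of the states $\phi_i$, i.e. $\psi(a_1\cdots a_n)=\phi_{i_k}(a_k)\,\psi(a_1\cdots a_{k-1}a_{k+1}\cdots a_n)$ for all $a_j\in\mathcal{A}_{i_j}$ with neighboring elements from different algebras and $i_{k-1}<i_k>i_{k+1}$ (only one inequality if $k\in\{1,n\}$).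
   Context: A noncommutative probability space $(\mathcal{A},\phi)$ is a unital $*$-algebra with a state. $\bigsqcup_{i\in I}\mathcal{A}_i$ denotes the free product of the algebras $\mathcal{A}_i$ in which the units $1_i$ of the different $\mathcal{A}_i$ are not identified. The monotone product of states $\phi_i$ is the state $\phi$ on $\bigsqcup_i\mathcal{A}_i$ given by $\phi(a_1\cdots a_{k-1}a_ka_{k+1}\cdots a_n)=\phi_{i_k}(a_k)\phi(a_1\cdots a_{k-1}a_{k+1}\cdots a_n)$ for $a_j\in\mathcal{A}_{i_j}$ whenever neighboring variables come from different algebras and $i_{k-1}<i_k>i_{k+1}$ (with only one inequality if $k\in\{1,n\}$). *)

theory Defs
  imports Complex_Main
begin

text \<open>A unital complex *-algebra given explicitly on a carrier set inside an ambient type.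
  Using explicit structures lets a whole family of (different) algebras live in one type.\<close>

record 'a star_alg =
  carr :: "'a set"
  add  :: "'a \<Rightarrow> 'a \<Rightarrow> 'a"
  smul :: "complex \<Rightarrow> 'a \<Rightarrow> 'a"
  zer  :: 'a
  mul  :: "'a \<Rightarrow> 'a \<Rightarrow> 'a"
  one  :: 'a
  star :: "'a \<Rightarrow> 'a"

definition unital_star_algebra :: "'a star_alg \<Rightarrow> bool" where
  "unital_star_algebra A \<longleftrightarrow>
     zer A \<in> carr A \<and> one A \<in> carr A \<and>
     (\<forall>x\<in>carr A. \<forall>y\<in>carr A. add A x y \<in> carr A \<and> mul A x y \<in> carr A) \<and>
     (\<forall>c. \<forall>x\<in>carr A. smul A c x \<in> carr A) \<and>
     (\<forall>x\<in>carr A. star A x \<in> carr A) \<and>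
     \<comment> \<open>complex vector space\<close>
     (\<forall>x\<in>carr A. \<forall>y\<in>carr A. \<forall>z\<in>carr A. add A (add A x y) z = add A x (add A y z)) \<and>
     (\<forall>x\<in>carr A. \<forall>y\<in>carr A. add A x y = add A y x) \<and>
     (\<forall>x\<in>carr A. add A (zer A) x = x) \<and>
     (\<forall>x\<in>carr A. add A x (smul A (-1) x) = zer A) \<and>
     (\<forall>x\<in>carr A. smul A 1 x = x) \<and>
     (\<forall>c d. \<forall>x\<in>carr A. smul A c (smul A d x) = smul A (c * d) x) \<and>
     (\<forall>c d. \<forall>x\<in>carr A. smul A (c + d) x = add A (smul A c x) (smul A d x)) \<and>
     (\<forall>c. \<forall>x\<in>carr A. \<forall>y\<in>carr A. smul A c (add A x y) = add A (smul A c x) (smul A c y)) \<and>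
     \<comment> \<open>associative bilinear multiplication with unit\<close>
     (\<forall>x\<in>carr A. \<forall>y\<in>carr A. \<forall>z\<in>carr A. mul A (mul A x y) z = mul A x (mul A y z)) \<and>
     (\<forall>x\<in>carr A. \<forall>y\<in>carr A. \<forall>z\<in>carr A.
        mul A x (add A y z) = add A (mul A x y) (mul A x z) \<and>
        mul A (add A x y) z = add A (mul A x z) (mul A y z)) \<and>
     (\<forall>c. \<forall>x\<in>carr A. \<forall>y\<in>carr A.
        mul A (smul A c x) y = smul A c (mul A x y) \<and> mul A x (smul A c y) = smul A c (mul A x y)) \<and>
     (\<forall>x\<in>carr A. mul A (one A) x = x \<and> mul A x (one A) = x) \<and>
     \<comment> \<open>involution\<close>
     (\<forall>x\<in>carr A. star A (star A x) = x) \<and>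
     (\<forall>x\<in>carr A. \<forall>y\<in>carr A. star A (add A x y) = add A (star A x) (star A y)) \<and>
     (\<forall>c. \<forall>x\<in>carr A. star A (smul A c x) = smul A (cnj c) (star A x)) \<and>
     (\<forall>x\<in>carr A. \<forall>y\<in>carr A. star A (mul A x y) = mul A (star A y) (star A x))"

definition is_state :: "'a star_alg \<Rightarrow> ('a \<Rightarrow> complex) \<Rightarrow> bool" where
  "is_state A \<phi> \<longleftrightarrow>
     (\<forall>x\<in>carr A. \<forall>y\<in>carr A. \<phi> (add A x y) = \<phi> x + \<phi> y) \<and>
     (\<forall>c. \<forall>x\<in>carr A. \<phi> (smul A c x) = c * \<phi> x) \<and>
     \<phi> (one A) = 1 \<and>
     (\<forall>x\<in>carr A. Im (\<phi> (mul A (star A x) x)) = 0 \<and> Re (\<phi> (mul A (star A x) x)) \<ge> 0)"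

definition nc_prob_space :: "'a star_alg \<Rightarrow> ('a \<Rightarrow> complex) \<Rightarrow> bool" where
  "nc_prob_space A \<phi> \<longleftrightarrow> unital_star_algebra A \<and> is_state A \<phi>"

text \<open>Words in the free product: a letter (i,a) stands for a \<in> A_i; the word [(i1,a1),...,(in,an)]
  stands for the product a1 ... an; the empty word is the unit of the free product.\<close>

definition valid_word :: "('i \<Rightarrow> 'a star_alg) \<Rightarrow> ('i \<times> 'a) list \<Rightarrow> bool" where
  "valid_word A w \<longleftrightarrow> (\<forall>(i,a)\<in>set w. a \<in> carr (A i))"

definition alternating :: "('i \<times> 'a) list \<Rightarrow> bool" where
  "alternating w \<longleftrightarrow> (\<forall>j. Suc j < length w \<longrightarrow> fst (w ! j) \<noteq> fst (w ! Suc j))"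

text \<open>A linear functional on the free product without identification of units
  (= tensor algebra over the direct sum of the A_i modulo a \<otimes> b = ab for a,b in the same A_i),
  described by its values on words: multilinear in each letter and compatible with
  multiplication of neighbouring letters from the same algebra.\<close>
definition free_prod_functional ::
  "('i \<Rightarrow> 'a star_alg) \<Rightarrow> (('i \<times> 'a) list \<Rightarrow> complex) \<Rightarrow> bool" where
  "free_prod_functional A \<psi> \<longleftrightarrow>
     (\<forall>u v i a b. valid_word A u \<longrightarrow> valid_word A v \<longrightarrow> a \<in> carr (A i) \<longrightarrow> b \<in> carr (A i) \<longrightarrow>
        \<psi> (u @ (i, add (A i) a b) # v) = \<psi> (u @ (i, a) # v) + \<psi> (u @ (i, b) # v)) \<and>
     (\<forall>u v i c a. valid_word A u \<longrightarrow> valid_word A v \<longrightarrow> a \<in> carr (A i) \<longrightarrow>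
        \<psi> (u @ (i, smul (A i) c a) # v) = c * \<psi> (u @ (i, a) # v)) \<and>
     (\<forall>u v i a b. valid_word A u \<longrightarrow> valid_word A v \<longrightarrow> a \<in> carr (A i) \<longrightarrow> b \<in> carr (A i) \<longrightarrow>
        \<psi> (u @ (i, a) # (i, b) # v) = \<psi> (u @ (i, mul (A i) a b) # v))"

end

theory Submission
  imports Defs
begin

text \<open>Write each letter b of A_j as b = phi_j(b) 1_j + b' with phi_j(b') = 0. Expanding the
  letters left of a one at a time, the centered parts accumulate in an alternating centered
  prefix c, and by the unit rule a unit 1_j following c is deleted if c followed by j is
  increasing and kills the word otherwise. A centered alternating prefix that is not increasing,
  or is followed by a letter of smaller index than its last one, kills the word whatever follows:
  expanding the suffix in the same way, every unit term dies and every centered term keeps a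
  non-increasing centered prefix, until the whole word is centered and alternating. At the letter
  a itself the prefix ends below i and v starts below i, so the unit term of a is absorbed and
  its centered term vanishes. Neighbouring letters of the same algebra can always be merged.\<close>

lemma valid_word_Nil [simp]: "valid_word A []"
  and valid_word_Cons [simp]: "valid_word A ((i, a) # w) \<longleftrightarrow> a \<in> carr (A i) \<and> valid_word A w"
  and valid_word_append [simp]: "valid_word A (u @ v) \<longleftrightarrow> valid_word A u \<and> valid_word A v"
  by (auto simp: valid_word_def)

lemma alternating_iff_distinct_adj [simp]: "alternating w \<longleftrightarrow> distinct_adj (map fst w)"
  by (simp add: alternating_def distinct_adj_conv_nth)

lemma sorted_wrt_less_snoc:
  fixes xs :: "'a::order list"
  shows "sorted_wrt (<) (xs @ [y]) \<longleftrightarrow> sorted_wrt (<) xs \<and> (xs = [] \<or> last xs < y)"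
  by (induction xs) (auto dest: order.strict_trans)

lemma
  assumes "unital_star_algebra B"
  shows one_closed [simp]: "one B \<in> carr B"
    and add_closed [simp]: "x \<in> carr B \<Longrightarrow> y \<in> carr B \<Longrightarrow> add B x y \<in> carr B"
    and mul_closed [simp]: "x \<in> carr B \<Longrightarrow> y \<in> carr B \<Longrightarrow> mul B x y \<in> carr B"
    and smul_closed [simp]: "x \<in> carr B \<Longrightarrow> smul B c x \<in> carr B"
    and one_mul [simp]: "x \<in> carr B \<Longrightarrow> mul B (one B) x = x"
  using assms by (simp_all add: unital_star_algebra_def)

definition centering :: "'a star_alg \<Rightarrow> ('a \<Rightarrow> complex) \<Rightarrow> 'a \<Rightarrow> 'a" where
  "centering B f b = add B b (smul B (- f b) (one B))"

lemma centering_closed [simp]: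
  "unital_star_algebra B \<Longrightarrow> b \<in> carr B \<Longrightarrow> centering B f b \<in> carr B"
  by (simp add: centering_def)

lemma state_centering [simp]:
  assumes "is_state B f" "unital_star_algebra B" "b \<in> carr B"
  shows "f (centering B f b) = 0"
  using assms by (simp add: is_state_def centering_def)

lemma free_prod_functional_add:
  "free_prod_functional A \<psi> \<Longrightarrow> valid_word A u \<Longrightarrow> valid_word A v \<Longrightarrow>
    a \<in> carr (A i) \<Longrightarrow> b \<in> carr (A i) \<Longrightarrow>
    \<psi> (u @ (i, add (A i) a b) # v) = \<psi> (u @ (i, a) # v) + \<psi> (u @ (i, b) # v)"
  and free_prod_functional_smul:
  "free_prod_functional A \<psi> \<Longrightarrow> valid_word A u \<Longrightarrow> valid_word A v \<Longrightarrow> a \<in> carr (A i) \<Longrightarrow>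
    \<psi> (u @ (i, smul (A i) c a) # v) = c * \<psi> (u @ (i, a) # v)"
  and free_prod_functional_mul:
  "free_prod_functional A \<psi> \<Longrightarrow> valid_word A u \<Longrightarrow> valid_word A v \<Longrightarrow>
    a \<in> carr (A i) \<Longrightarrow> b \<in> carr (A i) \<Longrightarrow>
    \<psi> (u @ (i, a) # (i, b) # v) = \<psi> (u @ (i, mul (A i) a b) # v)"
  unfolding free_prod_functional_def by blast+

lemma free_prod_functional_split_letter:
  assumes "free_prod_functional A \<psi>" "unital_star_algebra (A j)"
    and "valid_word A u" "valid_word A v" "b \<in> carr (A j)"
  shows "\<psi> (u @ (j, b) # v) =
    f b * \<psi> (u @ (j, one (A j)) # v) + \<psi> (u @ (j, centering (A j) f b) # v)"
  using assms
  by (simp add: centering_def free_prod_functional_add free_prod_functional_smul)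

fun reduce :: "('i \<Rightarrow> 'a star_alg) \<Rightarrow> ('i \<times> 'a) list \<Rightarrow> ('i \<times> 'a) list" where
  "reduce A ((i, a) # (j, b) # w) =
    (if i = j then reduce A ((i, mul (A i) a b) # w) else (i, a) # reduce A ((j, b) # w))"
| "reduce A w = w"

lemma hd_reduce: "fst (hd (reduce A w)) = fst (hd w)"
  by (induction A w rule: reduce.induct) auto

lemma alternating_reduce: "alternating (reduce A w)"
  by (induction A w rule: reduce.induct) (auto simp: distinct_adj_Cons hd_map hd_reduce)

lemma alternating_append_reduce:
  "alternating u \<Longrightarrow> u = [] \<or> w = [] \<or> fst (last u) \<noteq> fst (hd w) \<Longrightarrow>
    alternating (u @ reduce A w)"
  using alternating_reduce[of A w]
  by (auto simp: distinct_adj_append_iff hd_map hd_reduce last_map)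

lemma valid_word_reduce:
  "(\<And>i. unital_star_algebra (A i)) \<Longrightarrow> valid_word A w \<Longrightarrow> valid_word A (reduce A w)"
  by (induction A w rule: reduce.induct) auto

lemma free_prod_functional_reduce:
  "free_prod_functional A \<psi> \<Longrightarrow> (\<And>i. unital_star_algebra (A i)) \<Longrightarrow>
    valid_word A u \<Longrightarrow> valid_word A w \<Longrightarrow> \<psi> (u @ reduce A w) = \<psi> (u @ w)"
proof (induction A w arbitrary: u rule: reduce.induct)
  case (1 A i a j b w)
  show ?case
  proof (cases "i = j")
    case True
    then show ?thesis
      using "1.IH"(1)[of u] "1.prems" free_prod_functional_mul[of A \<psi> u w a i b] by simp
  next
    case False
    then show ?thesis using "1.IH"(2)[of "u @ [(i, a)]"] "1.prems" by simp
  qed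
qed auto

locale monotone_functional =
  fixes A :: "'i::linorder \<Rightarrow> 'a star_alg"
    and \<phi> :: "'i \<Rightarrow> 'a \<Rightarrow> complex"
    and \<psi> :: "('i \<times> 'a) list \<Rightarrow> complex"
  assumes ncps: "\<And>i. nc_prob_space (A i) (\<phi> i)"
    and lin: "free_prod_functional A \<psi>"
    and centered: "\<And>w. w \<noteq> [] \<Longrightarrow> valid_word A w \<Longrightarrow> alternating w \<Longrightarrow>
                     (\<forall>(j, a)\<in>set w. \<phi> j a = 0) \<Longrightarrow> \<psi> w = 0"
    and unit_rule: "\<And>u i v. valid_word A u \<Longrightarrow> valid_word A v \<Longrightarrow>
                     alternating (u @ (i, one (A i)) # v) \<Longrightarrow>
                     (\<forall>(j, a)\<in>set u. \<phi> j a = 0) \<Longrightarrow>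
                     \<psi> (u @ (i, one (A i)) # v) =
                       (if sorted_wrt (<) (map fst u @ [i]) then \<psi> (u @ v) else 0)"
begin

lemma algebra [simp]: "unital_star_algebra (A i)"
  and state: "is_state (A i) (\<phi> i)"
  using ncps by (simp_all add: nc_prob_space_def)

definition centered_alternating :: "('i \<times> 'a) list \<Rightarrow> bool" where
  "centered_alternating c \<longleftrightarrow>
    valid_word A c \<and> alternating c \<and> (\<forall>(j, x)\<in>set c. \<phi> j x = 0)"

lemma psi_reduce: "valid_word A u \<Longrightarrow> valid_word A w \<Longrightarrow> \<psi> (u @ reduce A w) = \<psi> (u @ w)"
  by (rule free_prod_functional_reduce[OF lin algebra])

lemma centered_alternating_Nil [simp]: "centered_alternating []"
  by (simp add: centered_alternating_def)

lemma centered_alternating_snoc: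
  "centered_alternating (c @ [(j, x)]) \<longleftrightarrow>
    centered_alternating c \<and> x \<in> carr (A j) \<and> \<phi> j x = 0 \<and> (c = [] \<or> fst (last c) \<noteq> j)"
  by (auto simp: centered_alternating_def distinct_adj_append_iff last_map)

lemma centered_alternating_snoc_centering:
  "centered_alternating c \<Longrightarrow> b \<in> carr (A j) \<Longrightarrow> c = [] \<or> fst (last c) \<noteq> j \<Longrightarrow>
    centered_alternating (c @ [(j, centering (A j) (\<phi> j) b)])"
  by (simp add: centered_alternating_snoc state)

lemma split_letter:
  "valid_word A u \<Longrightarrow> valid_word A v \<Longrightarrow> b \<in> carr (A j) \<Longrightarrow>
    \<psi> (u @ (j, b) # v) =
      \<phi> j b * \<psi> (u @ (j, one (A j)) # v) + \<psi> (u @ (j, centering (A j) (\<phi> j) b) # v)"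
  by (rule free_prod_functional_split_letter[OF lin algebra])

lemma centered_prefix_vanishes_alternating:
  assumes "centered_alternating c" "c \<noteq> []" "valid_word A w" "alternating (c @ w)"
    and "w = [] \<or> \<not> sorted_wrt (<) (map fst c @ [fst (hd w)])"
  shows "\<psi> (c @ w) = 0"
  using assms
proof (induction w arbitrary: c)
  case Nil
  then show ?case using centered[of c] by (simp add: centered_alternating_def)
next
  case (Cons x w)
  obtain j b where x: "x = (j, b)" by fastforce
  have b: "b \<in> carr (A j)" and unsorted: "\<not> sorted_wrt (<) (map fst c @ [j])"
    using Cons.prems x by auto
  have "\<psi> (c @ (j, one (A j)) # w) = 0"
    using unit_rule[of c w j] Cons.prems unsorted x by (simp add: centered_alternating_def)
  moreover have "\<psi> ((c @ [(j, centering (A j) (\<phi> j) b)]) @ w) = 0"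
  proof (rule Cons.IH)
    show "centered_alternating (c @ [(j, centering (A j) (\<phi> j) b)])"
      using Cons.prems x b
      by (intro centered_alternating_snoc_centering) (auto simp: distinct_adj_append_iff last_map)
    show "w = [] \<or>
        \<not> sorted_wrt (<) (map fst (c @ [(j, centering (A j) (\<phi> j) b)]) @ [fst (hd w)])"
      using unsorted by (auto simp: sorted_wrt_append)
  qed (use Cons.prems x in auto)
  ultimately show ?case
    using split_letter[of c w b j] Cons.prems x b by (simp add: centered_alternating_def)
qed

lemma centered_prefix_vanishes:
  assumes "centered_alternating c" "c \<noteq> []" "valid_word A w"
    and "\<not> sorted_wrt (<) (map fst c) \<or> w = [] \<or> fst (hd w) < fst (last c)"
  shows "\<psi> (c @ w) = 0"
  using assms
proof (induction c arbitrary: w rule: rev_induct)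
  case (snoc x c)
  obtain k y where x: "x = (k, y)" by fastforce
  have c: "centered_alternating c" "c = [] \<or> fst (last c) \<noteq> k" and y: "y \<in> carr (A k)"
    using snoc.prems(1) x by (simp_all add: centered_alternating_snoc)
  show ?case
  proof (cases "w \<noteq> [] \<and> fst (hd w) = k")
    case False
    have "\<psi> ((c @ [x]) @ reduce A w) = 0"
    proof (rule centered_prefix_vanishes_alternating)
      show "alternating ((c @ [x]) @ reduce A w)"
        using snoc.prems(1) False x
        by (intro alternating_append_reduce) (auto simp: centered_alternating_def)
      show "reduce A w = [] \<or> \<not> sorted_wrt (<) (map fst (c @ [x]) @ [fst (hd (reduce A w))])"
        using snoc.prems(4) sorted_wrt_less_snoc[of "map fst (c @ [x])" "fst (hd w)"]
        by (auto simp: hd_reduce last_map)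
    qed (use snoc.prems valid_word_reduce[of A w, OF algebra] in auto)
    then show ?thesis
      using psi_reduce[of "c @ [x]" w] snoc.prems by (simp add: centered_alternating_def)
  next
    case True
    then obtain z w' where w: "w = (k, z) # w'" by (cases w) auto
    have "c \<noteq> []"
      using snoc.prems(4) x w by auto
    have "\<psi> (c @ (k, mul (A k) y z) # w') = 0"
    proof (rule snoc.IH)
      show "\<not> sorted_wrt (<) (map fst c) \<or> (k, mul (A k) y z) # w' = [] \<or>
          fst (hd ((k, mul (A k) y z) # w')) < fst (last c)"
        using snoc.prems(4) x w c(2) \<open>c \<noteq> []\<close> by (auto simp: sorted_wrt_less_snoc last_map)
    qed (use c y w snoc.prems(3) \<open>c \<noteq> []\<close> in auto)
    then show ?thesis
      using free_prod_functional_mul[OF lin, of c w' y k z] c(1) x y w snoc.prems(3)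
      by (simp add: centered_alternating_def)
  qed
qed simp

lemma unit_rule_arbitrary_suffix:
  assumes "centered_alternating c" "c = [] \<or> fst (last c) \<noteq> j" "valid_word A w"
  shows "\<psi> (c @ (j, one (A j)) # w) =
    (if sorted_wrt (<) (map fst c @ [j]) then \<psi> (c @ w) else 0)"
proof (cases "w \<noteq> [] \<and> fst (hd w) = j")
  case False
  have alternating: "alternating ((c @ [(j, one (A j))]) @ reduce A w)"
    using assms(1,2) False
    by (intro alternating_append_reduce)
      (auto simp: centered_alternating_def distinct_adj_append_iff last_map)
  have "\<psi> (c @ (j, one (A j)) # w) = \<psi> ((c @ [(j, one (A j))]) @ reduce A w)"
    using assms psi_reduce[of "c @ [(j, one (A j))]" w] by (simp add: centered_alternating_def)
  also have "\<dots> = (if sorted_wrt (<) (map fst c @ [j]) then \<psi> (c @ reduce A w) else 0)"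
    using unit_rule[of c "reduce A w" j] assms valid_word_reduce[of A w, OF algebra] alternating
    by (simp add: centered_alternating_def)
  also have "\<psi> (c @ reduce A w) = \<psi> (c @ w)"
    using assms by (simp add: psi_reduce centered_alternating_def)
  finally show ?thesis .
next
  case True
  then obtain z w' where w: "w = (j, z) # w'" by (cases w) auto
  have merge: "\<psi> (c @ (j, one (A j)) # w) = \<psi> (c @ w)"
    using free_prod_functional_mul[OF lin, of c w' "one (A j)" j z] assms w
    by (simp add: centered_alternating_def)
  have "\<psi> (c @ w) = 0" if unsorted: "\<not> sorted_wrt (<) (map fst c @ [j])"
  proof -
    have "c \<noteq> []" using unsorted by auto
    then have "\<not> sorted_wrt (<) (map fst c) \<or> j < fst (last c)"
      using unsorted assms(2) by (auto simp: sorted_wrt_less_snoc last_map linorder_neq_iff)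
    then show ?thesis using centered_prefix_vanishes[of c w] \<open>c \<noteq> []\<close> assms w by auto
  qed
  then show ?thesis using merge by simp
qed

lemma unit_absorbed:
  assumes "centered_alternating c" "c = [] \<or> fst (last c) < j" "valid_word A w"
  shows "\<psi> (c @ (j, one (A j)) # w) = \<psi> (c @ w)"
proof -
  have "\<psi> (c @ w) = 0" if "\<not> sorted_wrt (<) (map fst c @ [j])"
    using centered_prefix_vanishes[of c w] that assms
    by (cases "c = []") (auto simp: sorted_wrt_less_snoc last_map)
  then show ?thesis
    using unit_rule_arbitrary_suffix[of c j w] assms by (auto simp: order.strict_iff_not)
qed

lemma monotone_rule_after_centered:
  assumes "centered_alternating c" "c = [] \<or> fst (last c) < i" "valid_word A v" "a \<in> carr (A i)"
    and "v = [] \<or> fst (hd v) < i"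
  shows "\<psi> (c @ (i, a) # v) = \<phi> i a * \<psi> (c @ v)"
proof -
  have "\<psi> (c @ (i, one (A i)) # v) = \<psi> (c @ v)"
    using unit_absorbed assms by auto
  moreover have "\<psi> ((c @ [(i, centering (A i) (\<phi> i) a)]) @ v) = 0"
    using assms by (intro centered_prefix_vanishes centered_alternating_snoc_centering) auto
  ultimately show ?thesis
    using split_letter[of c v a i] assms by (simp add: centered_alternating_def)
qed

lemma monotone_rule_centered_prefix:
  assumes "centered_alternating c" "valid_word A u" "valid_word A v" "a \<in> carr (A i)"
    and "c @ u = [] \<or> fst (last (c @ u)) < i" "v = [] \<or> fst (hd v) < i"
  shows "\<psi> (c @ u @ (i, a) # v) = \<phi> i a * \<psi> (c @ u @ v)"
  using assms
  \<comment> \<open>splitting the first letter of u moves its centered part into c; merging it with the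
    last letter of c shortens c\<close>
proof (induction "length c + 2 * length u" arbitrary: c u rule: less_induct)
  case less
  show ?case
  proof (cases u)
    case Nil
    then show ?thesis using monotone_rule_after_centered less.prems by simp
  next
    case (Cons x u')
    obtain j b where x: "x = (j, b)" by fastforce
    have b: "b \<in> carr (A j)" and u': "valid_word A u'"
      using less.prems(2) Cons x by auto
    consider (merge) c' y where "c = c' @ [(j, y)]" | (split) "c = [] \<or> fst (last c) \<noteq> j"
      by (metis prod.collapse rev_exhaust last_snoc)
    then show ?thesis
    proof cases
      case merge
      have c': "centered_alternating c'" and y: "y \<in> carr (A j)"
        using less.prems(1) merge by (simp_all add: centered_alternating_snoc)
      have "\<psi> (c' @ ((j, mul (A j) y b) # u') @ (i, a) # v) =
          \<phi> i a * \<psi> (c' @ ((j, mul (A j) y b) # u') @ v)"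
        by (rule less.hyps) (use less.prems merge Cons x c' y b u' in auto)
      then show ?thesis
        using free_prod_functional_mul[OF lin, of c' "u' @ (i, a) # v" y j b]
          free_prod_functional_mul[OF lin, of c' "u' @ v" y j b]
          less.prems merge Cons x c' y b u'
        by (simp add: centered_alternating_def)
    next
      case split
      let ?S = "sorted_wrt (<) (map fst c @ [j])"
      let ?b0 = "centering (A j) (\<phi> j) b"
      have unit_left: "\<psi> (c @ (j, one (A j)) # u' @ (i, a) # v) =
          (if ?S then \<psi> (c @ u' @ (i, a) # v) else 0)"
        and unit_right: "\<psi> (c @ (j, one (A j)) # u' @ v) = (if ?S then \<psi> (c @ u' @ v) else 0)"
        using unit_rule_arbitrary_suffix less.prems split u' by simp_all
      have centered_step:
        "\<psi> ((c @ [(j, ?b0)]) @ u' @ (i, a) # v) = \<phi> i a * \<psi> ((c @ [(j, ?b0)]) @ u' @ v)"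
        by (rule less.hyps)
          (use less.prems split Cons x b u' centered_alternating_snoc_centering in auto)
      have unit_step: "\<psi> (c @ u' @ (i, a) # v) = \<phi> i a * \<psi> (c @ u' @ v)" if ?S
      proof (rule less.hyps)
        show "c @ u' = [] \<or> fst (last (c @ u')) < i"
        proof (cases "u' = []")
          case True
          then have "j < i" using less.prems(5) Cons x by simp
          then show ?thesis
            using that True by (cases "c = []") (auto simp: sorted_wrt_less_snoc last_map)
        next
          case False
          then show ?thesis using less.prems(5) Cons by simp
        qed
      qed (use less.prems Cons u' in auto)
      show ?thesis
        using split_letter[of c "u' @ (i, a) # v" b j] split_letter[of c "u' @ v" b j]
          unit_left unit_right centered_step unit_step less.prems Cons x b u'
        by (cases ?S) (simp_all add: centered_alternating_def algebra_simps)
    qed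
  qed
qed

end

theorem theorem2p3:
  fixes A :: "'i::linorder \<Rightarrow> 'a star_alg"
    and \<phi> :: "'i \<Rightarrow> 'a \<Rightarrow> complex"
    and \<psi> :: "('i \<times> 'a) list \<Rightarrow> complex"
  assumes ncps: "\<And>i. nc_prob_space (A i) (\<phi> i)"
    and lin: "free_prod_functional A \<psi>"
    and empty: "\<psi> [] = 1"
    and restr: "\<And>i a. a \<in> carr (A i) \<Longrightarrow> \<psi> [(i, a)] = \<phi> i a"
    and centered: "\<And>w. w \<noteq> [] \<Longrightarrow> valid_word A w \<Longrightarrow> alternating w \<Longrightarrow>
                     (\<forall>(j, a)\<in>set w. \<phi> j a = 0) \<Longrightarrow> \<psi> w = 0"
    and unit_rule: "\<And>u i v. valid_word A u \<Longrightarrow> valid_word A v \<Longrightarrow>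
                     alternating (u @ (i, one (A i)) # v) \<Longrightarrow>
                     (\<forall>(j, a)\<in>set u. \<phi> j a = 0) \<Longrightarrow>
                     \<psi> (u @ (i, one (A i)) # v) =
                       (if sorted_wrt (<) (map fst u @ [i]) then \<psi> (u @ v) else 0)"
  shows "\<And>u i a v. valid_word A u \<Longrightarrow> valid_word A v \<Longrightarrow> a \<in> carr (A i) \<Longrightarrow>
           alternating (u @ (i, a) # v) \<Longrightarrow>
           (u = [] \<or> fst (last u) < i) \<Longrightarrow> (v = [] \<or> fst (hd v) < i) \<Longrightarrow>
           \<psi> (u @ (i, a) # v) = \<phi> i a * \<psi> (u @ v)"
proof -
  interpret monotone_functional A \<phi> \<psi>
    by (rule monotone_functional.intro[OF ncps lin centered unit_rule])
  show "\<psi> (u @ (i, a) # v) = \<phi> i a * \<psi> (u @ v)"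
    if "valid_word A u" "valid_word A v" "a \<in> carr (A i)"
      and "u = [] \<or> fst (last u) < i" "v = [] \<or> fst (hd v) < i" for u i a v
    using monotone_rule_centered_prefix[of "[]" u v a i] that by simp
qed

end
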